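(* Let $\mathcal C=\mathcal C(I,A,(\rho_i)_{i\in I},(C^a)_{a\in A})$ be a connected Cartan scheme and $\mathcal R=\mathcal R(\mathcal C,(R^a)_{a\in A})$ a finite root system of type $\mathcal C$. Let $a,b\in A$ and $i,j,l\in I$ such that $i\neq j$, $\rho_i(a)=\rho_j(a)=b\neq a$, and $\rho_l(a)=a$. Then: (1) $c^a_{ij}c^a_{il}c^a_{jl}=0$; (2) if $\rho_i\rho_l(b)\neq\rho_l(b)$ and $\rho_j\rho_l(b)\neq\rho_l(b)$, then $c^a_{ln}=c^b_{ln}$ for all $n\in I$.
   Context: Let $I$ be a nonempty finite set and $\{\alpha_i\mid i\in I\}$ the standard basis of $\mathbb Z^I$; $\mathbb N_0=\{0,1,2,\dots\}$. A generalized Cartan matrix is $C=(c_{ij})_{i,j\in I}\in\mathbb Z^{I\times I}$ with $c_{ii}=2$, $c_{jk}\le0$ for $j\ne k$, and $c_{ij}=0\Rightarrow c_{ji}=0$. A Cartan scheme $\mathcal C=\mathcal C(I,A,(\rho_i)_{i\in I},(C^a)_{a\in A})$ consists of a nonempty set $A$, maps $\rho_i:A\to A$ and generalized Cartan matrices $C^a=(c^a_{jk})_{j,k\in I}$ such that (C1) $\rho_i^2=\mathrm{id}$ and (C2) $c^a_{ij}=c^{\rho_i(a)}_{ij}$ for all $a\in A$, $i,j\in I$. It is connected if the group generated by the $\rho_i$ acts transitively on $A$. For $i\in I$, $a\in A$ let $\sigma_i^a\in\mathrm{Aut}(\mathbb Z^I)$, $\sigma_i^a(\alpha_j)=\alpha_j-c^a_{ij}\alpha_i$.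 A root system of type $\mathcal C$ is a family $\mathcal R=\mathcal R(\mathcal C,(R^a)_{a\in A})$ of subsets $R^a\subset\mathbb Z^I$ such that, writing $R^a_+=R^a\cap\mathbb N_0^I$ and $m^a_{i,j}=|R^a\cap(\mathbb N_0\alpha_i+\mathbb N_0\alpha_j)|$, for all $a\in A$, $i,j\in I$: (R1) $R^a=R^a_+\cup(-R^a_+)$; (R2) $R^a\cap\mathbb Z\alpha_i=\{\alpha_i,-\alpha_i\}$; (R3) $\sigma_i^a(R^a)=R^{\rho_i(a)}$; (R4) if $i\neq j$ and $m^a_{i,j}$ is finite then $(\rho_i\rho_j)^{m^a_{i,j}}(a)=a$. It is finite if every $R^a$ is finite. *)

theory Defs
  imports Main
begin

(* Index set I is the finite type 'i (I = UNIV), the set A is the type 'a (A = UNIV).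
   Z^I is represented by functions 'i => int. *)

definition gcm :: "('i \<Rightarrow> 'i \<Rightarrow> int) \<Rightarrow> bool" where
  "gcm c \<longleftrightarrow> (\<forall>i. c i i = 2) \<and> (\<forall>j k. j \<noteq> k \<longrightarrow> c j k \<le> 0)
     \<and> (\<forall>i j. c i j = 0 \<longrightarrow> c j i = 0)"

definition cartan_scheme :: "('i::finite \<Rightarrow> 'a \<Rightarrow> 'a) \<Rightarrow> ('a \<Rightarrow> 'i \<Rightarrow> 'i \<Rightarrow> int) \<Rightarrow> bool" where
  "cartan_scheme rho C \<longleftrightarrow> (\<forall>a. gcm (C a))
     \<and> (\<forall>i a. rho i (rho i a) = a)
     \<and> (\<forall>a i j. C a i j = C (rho i a) i j)"

definition connected_cs :: "('i \<Rightarrow> 'a \<Rightarrow> 'a) \<Rightarrow> bool" where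
  "connected_cs rho \<longleftrightarrow> (\<forall>a b. (a, b) \<in> (\<Union>i. {(x, rho i x) | x. True})\<^sup>*)"

definition alpha :: "'i \<Rightarrow> 'i \<Rightarrow> int" where
  "alpha i = (\<lambda>k. if k = i then 1 else 0)"

(* sigma_i^a, the linear map with sigma_i^a(alpha_j) = alpha_j - c^a_ij alpha_i *)
definition sigma :: "('a \<Rightarrow> 'i::finite \<Rightarrow> 'i \<Rightarrow> int) \<Rightarrow> 'a \<Rightarrow> 'i \<Rightarrow> ('i \<Rightarrow> int) \<Rightarrow> ('i \<Rightarrow> int)" where
  "sigma C a i v = (\<lambda>k. v k - (if k = i then (\<Sum>j\<in>UNIV. C a i j * v j) else 0))"

definition pos_roots :: "('a \<Rightarrow> ('i \<Rightarrow> int) set) \<Rightarrow> 'a \<Rightarrow> ('i \<Rightarrow> int) set" where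
  "pos_roots R a = R a \<inter> {v. \<forall>k. 0 \<le> v k}"

definition rank2_roots :: "('a \<Rightarrow> ('i \<Rightarrow> int) set) \<Rightarrow> 'a \<Rightarrow> 'i \<Rightarrow> 'i \<Rightarrow> ('i \<Rightarrow> int) set" where
  "rank2_roots R a i j = R a \<inter>
     {v. \<exists>p q :: nat. v = (\<lambda>k. int p * alpha i k + int q * alpha j k)}"

definition root_system :: "('i::finite \<Rightarrow> 'a \<Rightarrow> 'a) \<Rightarrow> ('a \<Rightarrow> 'i \<Rightarrow> 'i \<Rightarrow> int)
    \<Rightarrow> ('a \<Rightarrow> ('i \<Rightarrow> int) set) \<Rightarrow> bool" where
  "root_system rho C R \<longleftrightarrow> cartan_scheme rho C
     \<and> (\<forall>a. R a = pos_roots R a \<union> (\<lambda>v. (\<lambda>k. - v k)) ` pos_roots R a)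
     \<and> (\<forall>a i. R a \<inter> {v. \<exists>c::int. v = (\<lambda>k. c * alpha i k)} = {alpha i, (\<lambda>k. - alpha i k)})
     \<and> (\<forall>a i. sigma C a i ` R a = R (rho i a))
     \<and> (\<forall>a i j. i \<noteq> j \<and> finite (rank2_roots R a i j) \<longrightarrow>
          ((rho i \<circ> rho j) ^^ card (rank2_roots R a i j)) a = a)"

definition finite_root_system :: "('a \<Rightarrow> ('i \<Rightarrow> int) set) \<Rightarrow> bool" where
  "finite_root_system R \<longleftrightarrow> (\<forall>a. finite (R a))"

end

theory Submission
  imports Defs
begin

text \<open>
  Set \<open>b = \<rho>\<^sub>i(a) = \<rho>\<^sub>j(a)\<close>. Since \<open>\<rho>\<^sub>j(b) = a\<close>, \<open>\<rho>\<^sub>l(a) = a\<close> and the \<open>j\<close>-th row of the Cartan matrix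
  is the same at \<open>a\<close> and \<open>b\<close>, the composite \<open>\<sigma>\<^sup>a\<^sub>l \<sigma>\<^sup>a\<^sub>j \<sigma>\<^sup>a\<^sub>i\<close> maps \<open>R\<^sup>a\<close> into itself. If the
  three entries \<open>c\<^sup>a\<^sub>i\<^sub>j, c\<^sup>a\<^sub>i\<^sub>l, c\<^sup>a\<^sub>j\<^sub>l\<close> were all nonzero, the \<open>\<alpha>\<^sub>l\<close>-coordinate would grow strictly
  along the orbit of \<open>\<alpha>\<^sub>l\<close>, contradicting finiteness of \<open>R\<^sup>a\<close>; this gives (1).

  For (2): if \<open>c\<^sup>a\<^sub>i\<^sub>l = 0\<close>, then \<open>\<rho>\<^sub>i\<close> and \<open>\<rho>\<^sub>l\<close> commute at \<open>a\<close> by (R4), so \<open>\<rho>\<^sub>l(b) = b\<close> and the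
  composite \<open>\<sigma>\<^sup>b\<^sub>i \<sigma>\<^sup>b\<^sub>l \<sigma>\<^sup>a\<^sub>i \<sigma>\<^sup>a\<^sub>l\<close> preserves \<open>R\<^sup>a\<close> and translates \<open>\<alpha>\<^sub>n + t\<alpha>\<^sub>l\<close> by
  \<open>(c\<^sup>a\<^sub>l\<^sub>n - c\<^sup>b\<^sub>l\<^sub>n)\<alpha>\<^sub>l\<close>; finiteness forces this difference to vanish. Likewise if \<open>c\<^sup>a\<^sub>j\<^sub>l = 0\<close>.
  Otherwise \<open>c\<^sup>a\<^sub>i\<^sub>j = 0\<close> by (1); the hypotheses on \<open>\<rho>\<^sub>l(b)\<close> exclude the braid relation of
  type \<open>A\<^sub>2\<close>, so \<open>c\<^sup>a\<^sub>i\<^sub>l c\<^sup>a\<^sub>l\<^sub>i \<ge> 2\<close> and \<open>c\<^sup>a\<^sub>j\<^sub>l c\<^sup>a\<^sub>l\<^sub>j \<ge> 2\<close>, and then the orbit of \<open>\<alpha>\<^sub>l\<close> under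
  \<open>\<sigma>\<^sup>a\<^sub>l \<sigma>\<^sup>a\<^sub>j \<sigma>\<^sup>a\<^sub>i\<close> is again unbounded.
\<close>

lemma finite_no_increasing_self_map:
  fixes h :: "'a \<Rightarrow> 'b::linorder"
  assumes "finite S" "x \<in> S"
    and "\<And>y. y \<in> S \<Longrightarrow> f y \<in> S" "\<And>y. y \<in> S \<Longrightarrow> h y < h (f y)"
  shows False
proof -
  have "Max (h ` S) \<in> h ` S" using assms(1,2) by (intro Max_in) auto
  then obtain y where y: "y \<in> S" "h y = Max (h ` S)" by auto
  have "h (f y) \<le> Max (h ` S)" using assms(1,3) y(1) by (intro Max_ge) auto
  with assms(4)[OF y(1)] y(2) show False by simp
qed

text \<open>
  One step of \<open>\<sigma>\<^sub>l \<sigma>\<^sub>j \<sigma>\<^sub>i\<close> on \<open>x\<alpha>\<^sub>i + y\<alpha>\<^sub>j + z\<alpha>\<^sub>l\<close>, written with \<open>a\<^sub>u\<^sub>v = -c\<^sub>u\<^sub>v\<close>: first when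
  all off-diagonal entries on \<open>{i, j, l}\<close> are nonzero, then when \<open>c\<^sub>i\<^sub>j = c\<^sub>j\<^sub>i = 0\<close>.
\<close>

lemma triangle_invariant_step:
  fixes a12 a13 a21 a23 a31 a32 x y z x' y' z' :: int
  assumes "1 \<le> a12" "1 \<le> a13" "1 \<le> a21" "1 \<le> a23" "1 \<le> a31" "1 \<le> a32"
    and "0 \<le> x" "x \<le> y" "y \<le> z" "x < z"
    and "x' = a12 * y + a13 * z - x" "y' = a21 * x' + a23 * z - y" "z' = a31 * x' + a32 * y' - z"
  shows "0 \<le> x' \<and> x' \<le> y' \<and> y' \<le> z' \<and> x' < z' \<and> z < z'"
proof -
  have "y \<le> a12 * y" "z \<le> a13 * z" using assms by (simp_all add: mult_le_cancel_right1)
  then have x': "z \<le> x'" "y < x'" using assms by linarith+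
  then have "x' \<le> a21 * x'" "z \<le> a23 * z" using assms by (simp_all add: mult_le_cancel_right1)
  then have y': "x' + z - y \<le> y'" using assms by linarith
  then have "x' \<le> a31 * x'" "y' \<le> a32 * y'" using assms x' by (simp_all add: mult_le_cancel_right1)
  then have "x' + y' - z \<le> z'" using assms by linarith
  then show ?thesis using x' y' assms by linarith
qed

lemma path_invariant_step:
  fixes p q r s x y z x' y' z' :: int
  assumes "0 \<le> p" "0 \<le> q" "0 \<le> r" "0 \<le> s" "2 \<le> p * r" "2 \<le> q * s"
    and "0 \<le> x" "0 \<le> y" "0 \<le> z" "2 * x \<le> p * z" "2 * y \<le> q * z" "2 * x < p * z \<or> 2 * y < q * z"
    and "x' = p * z - x" "y' = q * z - y" "z' = r * x' + s * y' - z"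
  shows "0 \<le> x' \<and> 0 \<le> y' \<and> 0 \<le> z' \<and> 2 * x' \<le> p * z' \<and> 2 * y' \<le> q * z'
    \<and> (2 * x' < p * z' \<or> 2 * y' < q * z') \<and> z < z'"
proof -
  have "0 < p * r" "0 < q * s" using assms(5,6) by linarith+
  then have "1 \<le> p" "1 \<le> q" "1 \<le> r" "1 \<le> s" using assms(1-4) by (auto simp: zero_less_mult_iff)
  moreover from this have "s \<le> p * s" "r \<le> q * r" by (simp_all add: mult_le_cancel_right1)
  ultimately have "1 \<le> p * s" "1 \<le> q * r" by linarith+
  define A where "A = p * z - 2 * x"
  define B where "B = q * z - 2 * y"
  have AB: "0 \<le> A" "0 \<le> B" "0 < A + B" unfolding A_def B_def using assms by auto
  have "0 \<le> x'" "0 \<le> y'" using assms by auto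
  \<comment> \<open>the slack \<open>A, B\<close> of the invariant reproduces itself, multiplied by \<open>r\<close>, \<open>s\<close>, \<open>p s\<close>, \<open>q r\<close>\<close>
  have "2 * (z' - z) = (r * p - 2) * z + r * A + (s * q - 2) * z + s * B"
    unfolding assms(13-15) A_def B_def by (simp add: algebra_simps)
  moreover have "2 * (p * z' - 2 * x') = 2 * ((p * r - 2) * x') + p * ((s * q - 2) * z) + (p * s) * B"
    unfolding assms(13-15) B_def by (simp add: algebra_simps)
  moreover have "2 * (q * z' - 2 * y') = 2 * ((q * s - 2) * y') + q * ((r * p - 2) * z) + (q * r) * A"
    unfolding assms(13-15) A_def by (simp add: algebra_simps)
  moreover have "A \<le> r * A" "B \<le> s * B" "A \<le> (q * r) * A" "B \<le> (p * s) * B"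
    using AB \<open>1 \<le> r\<close> \<open>1 \<le> s\<close> \<open>1 \<le> p * s\<close> \<open>1 \<le> q * r\<close>
    by (simp_all add: mult_le_cancel_right1)
  moreover have "0 \<le> (r * p - 2) * z" "0 \<le> (s * q - 2) * z" "0 \<le> (p * r - 2) * x'"
    "0 \<le> (q * s - 2) * y'"
    using assms \<open>0 \<le> x'\<close> \<open>0 \<le> y'\<close> by (simp_all add: mult.commute)
  moreover have "0 \<le> p * ((s * q - 2) * z)" "0 \<le> q * ((r * p - 2) * z)"
    using assms by (simp_all add: mult.commute)
  ultimately have "z < z'" "2 * x' \<le> p * z'" "2 * y' \<le> q * z'"
    "0 < (p * z' - 2 * x') + (q * z' - 2 * y')"
    using AB \<open>0 \<le> x'\<close> \<open>0 \<le> y'\<close> by (smt (verit))+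
  then show ?thesis using \<open>0 \<le> x'\<close> \<open>0 \<le> y'\<close> assms(9) by auto
qed

section \<open>Integer combinations of simple roots\<close>

definition comb2 :: "'i \<Rightarrow> 'i \<Rightarrow> int \<Rightarrow> int \<Rightarrow> 'i \<Rightarrow> int" where
  "comb2 u1 u2 a1 a2 = (\<lambda>k. a1 * alpha u1 k + a2 * alpha u2 k)"

definition comb3 :: "'i \<Rightarrow> 'i \<Rightarrow> 'i \<Rightarrow> int \<Rightarrow> int \<Rightarrow> int \<Rightarrow> 'i \<Rightarrow> int" where
  "comb3 u1 u2 u3 a1 a2 a3 = (\<lambda>k. a1 * alpha u1 k + a2 * alpha u2 k + a3 * alpha u3 k)"

lemma sum_mult_alpha: "(\<Sum>j\<in>(UNIV::'i::finite set). f j * alpha u j) = f u"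
  unfolding alpha_def by (simp add: if_distrib cong: if_cong)

lemma sum_mult_comb2:
  "(\<Sum>j\<in>(UNIV::'i::finite set). f j * comb2 u1 u2 a1 a2 j) = a1 * f u1 + a2 * f u2"
  by (simp add: comb2_def algebra_simps sum.distrib sum_distrib_left[symmetric] sum_mult_alpha)

lemma sum_mult_comb3:
  "(\<Sum>j\<in>(UNIV::'i::finite set). f j * comb3 u1 u2 u3 a1 a2 a3 j) = a1 * f u1 + a2 * f u2 + a3 * f u3"
  by (simp add: comb3_def algebra_simps sum.distrib sum_distrib_left[symmetric] sum_mult_alpha)

lemma comb2_apply:
  "u1 \<noteq> u2 \<Longrightarrow> comb2 u1 u2 a1 a2 u1 = a1 \<and> comb2 u1 u2 a1 a2 u2 = a2"
  by (simp add: comb2_def alpha_def)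

lemma comb2_inject:
  "u1 \<noteq> u2 \<Longrightarrow> comb2 u1 u2 a1 a2 = comb2 u1 u2 b1 b2 \<longleftrightarrow> a1 = b1 \<and> a2 = b2"
  by (metis comb2_apply)

lemma comb3_apply_thd:
  "u1 \<noteq> u3 \<Longrightarrow> u2 \<noteq> u3 \<Longrightarrow> comb3 u1 u2 u3 a1 a2 a3 u3 = a3"
  by (simp add: comb3_def alpha_def)

lemma sigma_comb2_fst: "u1 \<noteq> u2 \<Longrightarrow>
  sigma C x u1 (comb2 u1 u2 a1 a2) = comb2 u1 u2 (a1 - (a1 * C x u1 u1 + a2 * C x u1 u2)) a2"
  unfolding sigma_def sum_mult_comb2 by (rule ext) (auto simp: comb2_def alpha_def)

lemma sigma_comb2_snd: "u1 \<noteq> u2 \<Longrightarrow>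
  sigma C x u2 (comb2 u1 u2 a1 a2) = comb2 u1 u2 a1 (a2 - (a1 * C x u2 u1 + a2 * C x u2 u2))"
  unfolding sigma_def sum_mult_comb2 by (rule ext) (auto simp: comb2_def alpha_def)

lemma sigma_comb3_fst: "u1 \<noteq> u2 \<Longrightarrow> u1 \<noteq> u3 \<Longrightarrow> u2 \<noteq> u3 \<Longrightarrow>
  sigma C x u1 (comb3 u1 u2 u3 a1 a2 a3)
    = comb3 u1 u2 u3 (a1 - (a1 * C x u1 u1 + a2 * C x u1 u2 + a3 * C x u1 u3)) a2 a3"
  unfolding sigma_def sum_mult_comb3 by (rule ext) (auto simp: comb3_def alpha_def)

lemma sigma_comb3_snd: "u1 \<noteq> u2 \<Longrightarrow> u1 \<noteq> u3 \<Longrightarrow> u2 \<noteq> u3 \<Longrightarrow>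
  sigma C x u2 (comb3 u1 u2 u3 a1 a2 a3)
    = comb3 u1 u2 u3 a1 (a2 - (a1 * C x u2 u1 + a2 * C x u2 u2 + a3 * C x u2 u3)) a3"
  unfolding sigma_def sum_mult_comb3 by (rule ext) (auto simp: comb3_def alpha_def)

lemma sigma_comb3_thd: "u1 \<noteq> u2 \<Longrightarrow> u1 \<noteq> u3 \<Longrightarrow> u2 \<noteq> u3 \<Longrightarrow>
  sigma C x u3 (comb3 u1 u2 u3 a1 a2 a3)
    = comb3 u1 u2 u3 a1 a2 (a3 - (a1 * C x u3 u1 + a2 * C x u3 u2 + a3 * C x u3 u3))"
  unfolding sigma_def sum_mult_comb3 by (rule ext) (auto simp: comb3_def alpha_def)

lemma rank2_roots_iff:
  "v \<in> rank2_roots R a i l \<longleftrightarrow> v \<in> R a \<and> (\<exists>P Q. v = comb2 i l P Q \<and> 0 \<le> P \<and> 0 \<le> Q)"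
proof
  assume "v \<in> rank2_roots R a i l"
  then show "v \<in> R a \<and> (\<exists>P Q. v = comb2 i l P Q \<and> 0 \<le> P \<and> 0 \<le> Q)"
    unfolding rank2_roots_def comb2_def by fastforce
next
  assume "v \<in> R a \<and> (\<exists>P Q. v = comb2 i l P Q \<and> 0 \<le> P \<and> 0 \<le> Q)"
  then obtain P Q where "v \<in> R a" "v = comb2 i l P Q" "0 \<le> P" "0 \<le> Q" by blast
  then have "v = (\<lambda>k. int (nat P) * alpha i k + int (nat Q) * alpha l k)"
    by (simp add: comb2_def)
  with \<open>v \<in> R a\<close> show "v \<in> rank2_roots R a i l" unfolding rank2_roots_def by blast
qed

section \<open>Finite root systems\<close>

locale finite_cartan_root_system =
  fixes rho :: "'i::finite \<Rightarrow> 'a \<Rightarrow> 'a" and C :: "'a \<Rightarrow> 'i \<Rightarrow> 'i \<Rightarrow> int"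
    and R :: "'a \<Rightarrow> ('i \<Rightarrow> int) set"
  assumes root_system: "root_system rho C R" and finite: "finite_root_system R"
begin

lemma cartan_scheme: "cartan_scheme rho C"
  using root_system unfolding root_system_def by (rule conjunct1)

lemma rho_rho [simp]: "rho i (rho i a) = a"
  using cartan_scheme unfolding cartan_scheme_def by (elim conjE) (erule allE)+

lemma cartan_rho: "C (rho i a) i k = C a i k"
  using cartan_scheme unfolding cartan_scheme_def by metis

lemma gcm: "gcm (C a)"
  using cartan_scheme unfolding cartan_scheme_def by (elim conjE) (erule allE)

lemma cartan_diag [simp]: "C a i i = 2"
  using gcm unfolding gcm_def by blast

lemma cartan_nonpos: "j \<noteq> k \<Longrightarrow> C a j k \<le> 0"
  using gcm unfolding gcm_def by blast

lemma cartan_le_minus_one: "j \<noteq> k \<Longrightarrow> C a j k \<noteq> 0 \<Longrightarrow> C a j k \<le> -1"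
  using cartan_nonpos[of j k a] by linarith

lemma cartan_eq_0_sym: "C a i j = 0 \<Longrightarrow> C a j i = 0"
  using gcm unfolding gcm_def by blast

lemma sigma_rho: "sigma C (rho i a) i = sigma C a i"
  unfolding sigma_def by (intro ext) (simp add: cartan_rho)

lemma sigma_image_roots: "sigma C a i ` R a = R (rho i a)"
  using root_system unfolding root_system_def by (elim conjE) (erule allE)+

lemma sigma_in_roots: "v \<in> R a \<Longrightarrow> sigma C a i v \<in> R (rho i a)"
  using sigma_image_roots by blast

lemma roots_inter_multiples_alpha:
  "R a \<inter> {v. \<exists>c::int. v = (\<lambda>k. c * alpha i k)} = {alpha i, (\<lambda>k. - alpha i k)}"
  using root_system unfolding root_system_def by (elim conjE) (erule allE)+

lemma alpha_in_roots: "alpha i \<in> R a"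
  using roots_inter_multiples_alpha by blast

lemma root_mult_alpha: "(\<lambda>k. c * alpha i k) \<in> R a \<Longrightarrow> c = 1 \<or> c = -1"
proof -
  assume "(\<lambda>k. c * alpha i k) \<in> R a"
  then have "(\<lambda>k. c * alpha i k) \<in> {alpha i, (\<lambda>k. - alpha i k)}"
    using roots_inter_multiples_alpha by blast
  then have "(\<lambda>k. c * alpha i k) i = alpha i i \<or> (\<lambda>k. c * alpha i k) i = - alpha i i"
    by (metis insertE singletonD)
  then show ?thesis by (simp add: alpha_def)
qed

lemma root_sign: "v \<in> R a \<Longrightarrow> (\<forall>k. 0 \<le> v k) \<or> (\<forall>k. v k \<le> 0)"
proof -
  assume "v \<in> R a"
  moreover have "R a = pos_roots R a \<union> (\<lambda>v. (\<lambda>k. - v k)) ` pos_roots R a"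
    using root_system unfolding root_system_def by (elim conjE) (erule allE)
  ultimately show ?thesis unfolding pos_roots_def by auto
qed

lemma rho_pow_card_rank2_roots:
  "i \<noteq> j \<Longrightarrow> finite (rank2_roots R a i j)
    \<Longrightarrow> ((rho i \<circ> rho j) ^^ card (rank2_roots R a i j)) a = a"
  using root_system unfolding root_system_def by (elim conjE) blast

lemma no_increasing_self_map_on_roots:
  fixes h :: "('i \<Rightarrow> int) \<Rightarrow> int"
  assumes "v \<in> R a" "P v"
    and "\<And>w. w \<in> R a \<Longrightarrow> P w \<Longrightarrow> f w \<in> R a \<and> P (f w) \<and> h w < h (f w)"
  shows False
proof (rule finite_no_increasing_self_map[of "{w \<in> R a. P w}" v f h])
  show "finite {w \<in> R a. P w}" using finite unfolding finite_root_system_def by simp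
qed (use assms in auto)

lemma nonneg_root_comb2_cases:
  assumes "comb2 i l P Q \<in> R a" "i \<noteq> l" "0 \<le> P" "0 \<le> Q"
  shows "(P = 1 \<and> Q = 0) \<or> (P = 0 \<and> Q = 1) \<or> (0 < P \<and> 0 < Q)"
proof -
  have "comb2 i l P 0 = (\<lambda>k. P * alpha i k)" "comb2 i l 0 Q = (\<lambda>k. Q * alpha l k)"
    by (simp_all add: comb2_def)
  then show ?thesis using assms root_mult_alpha[of P i a] root_mult_alpha[of Q l a] by fastforce
qed

lemma root_comb2_sign:
  assumes "comb2 i l P Q \<in> R a" "i \<noteq> l"
  shows "(0 \<le> P \<and> 0 \<le> Q) \<or> (P \<le> 0 \<and> Q \<le> 0)"
  using root_sign[OF assms(1)] comb2_apply[OF assms(2)] by metis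

lemma alphas_in_rank2_roots:
  "comb2 i l 1 0 \<in> rank2_roots R a i l" "comb2 i l 0 1 \<in> rank2_roots R a i l"
proof -
  have "comb2 i l 1 0 = alpha i" "comb2 i l 0 1 = alpha l" by (simp_all add: comb2_def)
  then show "comb2 i l 1 0 \<in> rank2_roots R a i l" "comb2 i l 0 1 \<in> rank2_roots R a i l"
    unfolding rank2_roots_iff using alpha_in_roots by fastforce+
qed

lemma rank2_roots_cartan_eq_0:
  assumes "i \<noteq> l" "C a i l = 0"
  shows "rank2_roots R a i l = {comb2 i l 1 0, comb2 i l 0 1}"
proof
  show "{comb2 i l 1 0, comb2 i l 0 1} \<subseteq> rank2_roots R a i l"
    using alphas_in_rank2_roots by blast
next
  show "rank2_roots R a i l \<subseteq> {comb2 i l 1 0, comb2 i l 0 1}"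
  proof
    fix v assume "v \<in> rank2_roots R a i l"
    then obtain P Q where v: "v \<in> R a" "v = comb2 i l P Q" "0 \<le> P" "0 \<le> Q"
      unfolding rank2_roots_iff by blast
    have "comb2 i l (- P) Q \<in> R (rho i a)"
      using sigma_in_roots[OF v(1), of i] v(2) assms by (simp add: sigma_comb2_fst)
    then have "\<not> (0 < P \<and> 0 < Q)" using root_comb2_sign assms(1) by fastforce
    then show "v \<in> {comb2 i l 1 0, comb2 i l 0 1}"
      using nonneg_root_comb2_cases[OF v(1)[unfolded v(2)] assms(1) v(3,4)] v(2) by auto
  qed
qed

lemma rank2_roots_cartan_eq_minus_one:
  assumes "i \<noteq> l" "C a i l = -1" "C a l i = -1"
  shows "rank2_roots R a i l = {comb2 i l 1 0, comb2 i l 0 1, comb2 i l 1 1}"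
proof
  have "comb2 i l 1 1 = sigma C (rho i a) i (comb2 i l 0 1)"
    using assms(1,2) by (simp add: sigma_comb2_fst cartan_rho)
  also have "\<dots> \<in> R a"
    using sigma_in_roots[of "comb2 i l 0 1" "rho i a" i] alpha_in_roots[of l]
    by (simp add: comb2_def)
  finally have "comb2 i l 1 1 \<in> R a" .
  then have "comb2 i l 1 1 \<in> rank2_roots R a i l" unfolding rank2_roots_iff by fastforce
  then show "{comb2 i l 1 0, comb2 i l 0 1, comb2 i l 1 1} \<subseteq> rank2_roots R a i l"
    using alphas_in_rank2_roots by blast
next
  show "rank2_roots R a i l \<subseteq> {comb2 i l 1 0, comb2 i l 0 1, comb2 i l 1 1}"
  proof
    fix v assume "v \<in> rank2_roots R a i l"
    then obtain P Q where v: "v \<in> R a" "v = comb2 i l P Q" "0 \<le> P" "0 \<le> Q"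
      unfolding rank2_roots_iff by blast
    show "v \<in> {comb2 i l 1 0, comb2 i l 0 1, comb2 i l 1 1}"
    proof (cases "0 < P \<and> 0 < Q")
      case True
      have l: "comb2 i l P (P - Q) \<in> R (rho l a)"
        using sigma_in_roots[OF v(1), of l] v(2) assms by (simp add: sigma_comb2_snd)
      have "comb2 i l (Q - P) Q \<in> R (rho i a)"
        using sigma_in_roots[OF v(1), of i] v(2) assms by (simp add: sigma_comb2_fst)
      then have "P = Q"
        using root_comb2_sign[OF l assms(1)] root_comb2_sign[OF _ assms(1)] True by fastforce
      then have "P = 1"
        using nonneg_root_comb2_cases[of i l P 0] l v(3) assms(1) by simp
      with \<open>P = Q\<close> v(2) show ?thesis by simp
    next
      case False
      then show ?thesis
        using nonneg_root_comb2_cases[OF v(1)[unfolded v(2)] assms(1) v(3,4)] v(2) by auto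
    qed
  qed
qed

lemma rho_commute_of_cartan_eq_0:
  assumes "i \<noteq> l" "C a i l = 0"
  shows "rho i (rho l a) = rho l (rho i a)"
proof -
  have "card (rank2_roots R a i l) = 2"
    using assms by (simp add: rank2_roots_cartan_eq_0 comb2_inject)
  moreover have "finite (rank2_roots R a i l)" using assms by (simp add: rank2_roots_cartan_eq_0)
  ultimately have "((rho i \<circ> rho l) ^^ 2) a = a"
    using rho_pow_card_rank2_roots[of i l a] assms(1) by simp
  then have "rho i (rho l (rho i (rho l a))) = a" by (simp add: numeral_2_eq_2)
  then show ?thesis by (metis rho_rho)
qed

lemma rho_braid_of_cartan_eq_minus_one:
  assumes "i \<noteq> l" "C a i l = -1" "C a l i = -1"
  shows "rho i (rho l (rho i a)) = rho l (rho i (rho l a))"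
proof -
  have "card (rank2_roots R a i l) = 3"
    using assms by (simp add: rank2_roots_cartan_eq_minus_one comb2_inject)
  moreover have "finite (rank2_roots R a i l)" using assms by (simp add: rank2_roots_cartan_eq_minus_one)
  ultimately have "((rho i \<circ> rho l) ^^ 3) a = a"
    using rho_pow_card_rank2_roots[of i l a] assms(1) by simp
  then have "rho i (rho l (rho i (rho l (rho i (rho l a))))) = a" by (simp add: numeral_3_eq_3)
  then show ?thesis by (metis rho_rho)
qed

lemma cartan_product_ge_2_of_not_braid:
  assumes "i \<noteq> l" "C a i l \<noteq> 0" "rho i (rho l (rho i a)) \<noteq> rho l (rho i (rho l a))"
  shows "2 \<le> C a i l * C a l i"
proof -
  have "C a i l \<le> -1" "C a l i \<le> -1"
    using assms(1,2) cartan_le_minus_one cartan_eq_0_sym by metis+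
  moreover have "\<not> (C a i l = -1 \<and> C a l i = -1)"
    using rho_braid_of_cartan_eq_minus_one assms(1,3) by blast
  moreover have "0 \<le> (C a i l + 1) * (C a l i + 1)"
    using calculation(1,2) by (intro mult_nonpos_nonpos) auto
  moreover have "C a i l * C a l i = (C a i l + 1) * (C a l i + 1) - C a i l - C a l i - 1"
    by (simp add: algebra_simps)
  ultimately show ?thesis by linarith
qed

lemma cartan_row_rho_of_cartan_eq_0:
  assumes "i \<noteq> l" "C a i l = 0" "rho l a = a"
  shows "C a l n = C (rho i a) l n"
proof -
  define b where "b = rho i a"
  have "rho l b = b" using rho_commute_of_cartan_eq_0[OF assms(1,2)] assms(3) by (simp add: b_def)
  have row_i: "C b i k = C a i k" for k unfolding b_def by (rule cartan_rho)
  have "C a l i = 0" "C b l i = 0" using assms(2) row_i[of l] cartan_eq_0_sym by auto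
  consider "n = l" | "n = i" | "n \<noteq> i" "n \<noteq> l" by blast
  then show ?thesis
  proof cases
    case 3
    define \<delta> where "\<delta> = C a l n - C b l n"
    define f where "f = sigma C b i \<circ> sigma C b l \<circ> sigma C a i \<circ> sigma C a l"
    have f_roots: "f v \<in> R a" if "v \<in> R a" for v
      using sigma_in_roots[OF that, of l] sigma_in_roots[of _ a i] sigma_in_roots[of _ b l]
        sigma_in_roots[of _ b i] assms(3) \<open>rho l b = b\<close>
      by (simp add: f_def b_def)
    \<comment> \<open>\<open>f\<close> translates \<open>\<alpha>\<^sub>n + t\<alpha>\<^sub>l\<close> by \<open>\<delta>\<alpha>\<^sub>l\<close>; the \<open>\<alpha>\<^sub>i\<close>-components cancel because \<open>c\<^sup>a\<^sub>i\<^sub>n = c\<^sup>b\<^sub>i\<^sub>n\<close>.\<close>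
    have f_comb3: "f (comb3 n i l 1 0 t) = comb3 n i l 1 0 (t + \<delta>)" for t
      using 3 assms(1,2) \<open>C a l i = 0\<close> \<open>C b l i = 0\<close> row_i[of n] row_i[of l]
      by (simp add: f_def \<delta>_def sigma_comb3_fst sigma_comb3_snd sigma_comb3_thd algebra_simps)
    show ?thesis
    proof (rule ccontr)
      assume "C a l n \<noteq> C (rho i a) l n"
      then have "0 < \<delta> * \<delta>" unfolding \<delta>_def b_def by (auto simp: zero_less_mult_iff)
      show False
      proof (rule no_increasing_self_map_on_roots[of "alpha n" a "\<lambda>v. \<exists>t. v = comb3 n i l 1 0 t" f
            "\<lambda>v. \<delta> * v l"])
        show "\<exists>t. alpha n = comb3 n i l 1 0 t" by (rule exI[of _ 0]) (simp add: comb3_def)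
      next
        fix w assume "w \<in> R a" "\<exists>t. w = comb3 n i l 1 0 t"
        then obtain t where "w = comb3 n i l 1 0 t" by blast
        then show "f w \<in> R a \<and> (\<exists>t. f w = comb3 n i l 1 0 t) \<and> \<delta> * w l < \<delta> * f w l"
          using f_roots[OF \<open>w \<in> R a\<close>] f_comb3[of t] 3 assms(1) \<open>0 < \<delta> * \<delta>\<close>
          by (simp add: comb3_apply_thd algebra_simps) blast
      qed (rule alpha_in_roots)
    qed
  qed (use \<open>C a l i = 0\<close> \<open>C b l i = 0\<close> b_def in simp_all)
qed

lemma sigma_lji_in_roots:
  assumes "rho i a = rho j a" "rho l a = a" "v \<in> R a"
  shows "sigma C a l (sigma C a j (sigma C a i v)) \<in> R a"
proof -
  have "sigma C a i v \<in> R (rho j a)" using sigma_in_roots[OF assms(3), of i] assms(1) by simp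
  then have "sigma C (rho j a) j (sigma C a i v) \<in> R a"
    using sigma_in_roots[of "sigma C a i v" "rho j a" j] by simp
  then have "sigma C a j (sigma C a i v) \<in> R a" by (simp add: sigma_rho)
  from sigma_in_roots[OF this, of l] show ?thesis using assms(2) by simp
qed

lemma lji_orbit_no_increasing_invariant:
  assumes "i \<noteq> j" "i \<noteq> l" "j \<noteq> l" "rho i a = rho j a" "rho l a = a"
    and "P 0 0 1"
    and "\<And>x y z x' y' z'. P x y z \<Longrightarrow> x' = - x - C a i j * y - C a i l * z
      \<Longrightarrow> y' = - y - C a j i * x' - C a j l * z \<Longrightarrow> z' = - z - C a l i * x' - C a l j * y'
      \<Longrightarrow> P x' y' z' \<and> z < z'"
  shows False
proof -
  let ?g = "\<lambda>v. sigma C a l (sigma C a j (sigma C a i v))"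
  have g_comb3: "?g (comb3 i j l x y z) = comb3 i j l x' y' z'"
    if "x' = - x - C a i j * y - C a i l * z" "y' = - y - C a j i * x' - C a j l * z"
      "z' = - z - C a l i * x' - C a l j * y'" for x y z x' y' z'
    using assms(1-3) unfolding that
    by (simp add: sigma_comb3_fst sigma_comb3_snd sigma_comb3_thd algebra_simps)
  show False
  proof (rule no_increasing_self_map_on_roots[of "alpha l" a
        "\<lambda>v. \<exists>x y z. v = comb3 i j l x y z \<and> P x y z" ?g "\<lambda>v. v l"])
    show "\<exists>x y z. alpha l = comb3 i j l x y z \<and> P x y z"
      using assms(6) by (intro exI[of _ 0] exI[of _ 1]) (simp add: comb3_def)
  next
    fix w assume w: "w \<in> R a" "\<exists>x y z. w = comb3 i j l x y z \<and> P x y z"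
    then obtain x y z where "w = comb3 i j l x y z" "P x y z" by blast
    moreover define x' where "x' = - x - C a i j * y - C a i l * z"
    moreover define y' where "y' = - y - C a j i * x' - C a j l * z"
    moreover define z' where "z' = - z - C a l i * x' - C a l j * y'"
    ultimately show "?g w \<in> R a \<and> (\<exists>x y z. ?g w = comb3 i j l x y z \<and> P x y z) \<and> w l < ?g w l"
      using assms(7) g_comb3 sigma_lji_in_roots[OF assms(4,5) w(1)] comb3_apply_thd assms(2,3)
      by metis
  qed (rule alpha_in_roots)
qed

lemma triangle_cartan_product_eq_0:
  assumes "i \<noteq> j" "rho i a = rho j a" "rho i a \<noteq> a" "rho l a = a"
  shows "C a i j * C a i l * C a j l = 0"
proof (rule ccontr)
  assume "C a i j * C a i l * C a j l \<noteq> 0"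
  then have "C a i j \<noteq> 0" "C a i l \<noteq> 0" "C a j l \<noteq> 0" by auto
  moreover have "i \<noteq> l" "j \<noteq> l" using assms by auto
  ultimately have "C a i j \<le> -1" "C a i l \<le> -1" "C a j l \<le> -1"
    "C a j i \<le> -1" "C a l i \<le> -1" "C a l j \<le> -1"
    using assms(1) cartan_le_minus_one cartan_eq_0_sym by metis+
  show False
  proof (rule lji_orbit_no_increasing_invariant[OF assms(1) \<open>i \<noteq> l\<close> \<open>j \<noteq> l\<close> assms(2,4),
        where P = "\<lambda>x y z. 0 \<le> x \<and> x \<le> y \<and> y \<le> z \<and> x < z"])
    fix x y z x' y' z' :: int
    assume "0 \<le> x \<and> x \<le> y \<and> y \<le> z \<and> x < z"
      and "x' = - x - C a i j * y - C a i l * z" "y' = - y - C a j i * x' - C a j l * z"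
        "z' = - z - C a l i * x' - C a l j * y'"
    then show "(0 \<le> x' \<and> x' \<le> y' \<and> y' \<le> z' \<and> x' < z') \<and> z < z'"
      using triangle_invariant_step[of "- C a i j" "- C a i l" "- C a j i" "- C a j l" "- C a l i"
          "- C a l j" x y z x' y' z'] \<open>C a i j \<le> -1\<close> \<open>C a i l \<le> -1\<close> \<open>C a j l \<le> -1\<close>
        \<open>C a j i \<le> -1\<close> \<open>C a l i \<le> -1\<close> \<open>C a l j \<le> -1\<close>
      by simp
  qed simp
qed

lemma path_cartan_products_lt_2:
  assumes "i \<noteq> j" "rho i a = rho j a" "rho i a \<noteq> a" "rho l a = a" "C a i j = 0"
  shows "C a i l * C a l i < 2 \<or> C a j l * C a l j < 2"
proof (rule ccontr)
  assume "\<not> (C a i l * C a l i < 2 \<or> C a j l * C a l j < 2)"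
  then have ge2: "2 \<le> - C a i l * - C a l i" "2 \<le> - C a j l * - C a l j" by auto
  have "i \<noteq> l" "j \<noteq> l" using assms by auto
  then have nonneg: "0 \<le> - C a i l" "0 \<le> - C a l i" "0 \<le> - C a j l" "0 \<le> - C a l j"
    using cartan_nonpos[of _ _ a] by (simp_all add: eq_commute[of l])
  have "C a j i = 0" using assms(5) cartan_eq_0_sym by blast
  show False
  proof (rule lji_orbit_no_increasing_invariant[OF assms(1) \<open>i \<noteq> l\<close> \<open>j \<noteq> l\<close> assms(2,4),
        where P = "\<lambda>x y z. 0 \<le> x \<and> 0 \<le> y \<and> 0 \<le> z \<and> 2 * x \<le> - C a i l * z \<and> 2 * y \<le> - C a j l * z
          \<and> (2 * x < - C a i l * z \<or> 2 * y < - C a j l * z)"])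
    fix x y z x' y' z' :: int
    assume "0 \<le> x \<and> 0 \<le> y \<and> 0 \<le> z \<and> 2 * x \<le> - C a i l * z \<and> 2 * y \<le> - C a j l * z
          \<and> (2 * x < - C a i l * z \<or> 2 * y < - C a j l * z)"
      and "x' = - x - C a i j * y - C a i l * z" "y' = - y - C a j i * x' - C a j l * z"
        "z' = - z - C a l i * x' - C a l j * y'"
    then show "(0 \<le> x' \<and> 0 \<le> y' \<and> 0 \<le> z' \<and> 2 * x' \<le> - C a i l * z' \<and> 2 * y' \<le> - C a j l * z'
          \<and> (2 * x' < - C a i l * z' \<or> 2 * y' < - C a j l * z')) \<and> z < z'"
      using path_invariant_step[OF nonneg(1,3,2,4) ge2, of x y z x' y' z'] assms(5) \<open>C a j i = 0\<close>
      by (simp add: algebra_simps)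
  qed (use ge2 nonneg in auto)
qed

end

theorem lemma4p10:
  fixes rho :: "'i::finite \<Rightarrow> 'a \<Rightarrow> 'a"
    and C :: "'a \<Rightarrow> 'i \<Rightarrow> 'i \<Rightarrow> int"
    and R :: "'a \<Rightarrow> ('i \<Rightarrow> int) set"
    and a b :: 'a and i j l :: 'i
  assumes "cartan_scheme rho C"
    and "connected_cs rho"
    and "root_system rho C R"
    and "finite_root_system R"
    and "i \<noteq> j"
    and "rho i a = b" and "rho j a = b" and "b \<noteq> a"
    and "rho l a = a"
  shows "C a i j * C a i l * C a j l = 0 \<and>
         (rho i (rho l b) \<noteq> rho l b \<and> rho j (rho l b) \<noteq> rho l b
           \<longrightarrow> (\<forall>n. C a l n = C b l n))"
proof -
  interpret finite_cartan_root_system rho C R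
    using assms(3,4) by unfold_locales
  have "i \<noteq> l" "j \<noteq> l" using assms(6-9) by auto
  have triangle: "C a i j * C a i l * C a j l = 0"
    using triangle_cartan_product_eq_0 assms(5-9) by simp
  moreover have "C a l n = C b l n"
    if not_fixed: "rho i (rho l b) \<noteq> rho l b" "rho j (rho l b) \<noteq> rho l b" for n
  proof (cases "C a i l = 0 \<or> C a j l = 0")
    case True
    then show ?thesis
      using cartan_row_rho_of_cartan_eq_0[of i l a n] cartan_row_rho_of_cartan_eq_0[of j l a n]
        \<open>i \<noteq> l\<close> \<open>j \<noteq> l\<close> assms(6,7,9) by auto
  next
    case False
    then have "2 \<le> C a i l * C a l i" "2 \<le> C a j l * C a l j"
      using cartan_product_ge_2_of_not_braid \<open>i \<noteq> l\<close> \<open>j \<noteq> l\<close> not_fixed assms(6,7,9) by simp_all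
    moreover have "C a i j = 0" using triangle False by simp
    ultimately show ?thesis
      using path_cartan_products_lt_2[of i j a l] assms(5-9) by auto
  qed
  ultimately show ?thesis by blast
qed

end
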